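(* Let $n\ge2$, $f\in C^n(\mathbb{R})$, $2\le\kappa\le n$, $\alpha=(\alpha_0,\dots,\alpha_\kappa)\in\mathbb{N}_{\ge0}^{\kappa+1}$ with $|\alpha|\le n+1$, and $(\lambda_0,\dots,\lambda_\kappa)\in\mathbb{R}^{\kappa+1}$ such that for some $i\ne j$ we have $\lambda_i\ne\lambda_j$ and $\alpha_i,\alpha_j>0$. Then for every $k\in\{0,\dots,\kappa\}\setminus\{i,j\}$, \begin{align*} f[\lambda_i^{(\alpha_i)},\lambda_k^{(\alpha_k)},\lambda_j^{(\alpha_j)},\widetilde\lambda^{(\widetilde\alpha)}] =&\sum_{l=0}^{\alpha_i-1}p_{\alpha_j,l}\Big(\frac{\lambda_i-\lambda_k}{\lambda_i-\lambda_j}\Big) f[\lambda_i^{(\alpha_i-l)},\lambda_k^{(\alpha_k+\alpha_j+l)},\widetilde\lambda^{(\widetilde\alpha)}]\\ &+\sum_{l=0}^{\alpha_j-1}p_{\alpha_i,l}\Big(\frac{\lambda_k-\lambda_j}{\lambda_i-\lambda_j}\Big) f[\lambda_k^{(\alpha_k+\alpha_i+l)},\lambda_j^{(\alpha_j-l)},\widetilde\lambda^{(\widetilde\alpha)}], \end{align*} where $\widetilde\lambda^{(\widetilde\alpha)}$ denotes the list of the remaining variables $\lambda_m^{(\alpha_m)}$, $m\in\{0,\dots,\kappa\}\setminus\{i,j,k\}$, and $p_{a,l}(x)=\binom{a+l-1}{l}x^{a}(1-x)^{l}$.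
   Context: Divided differences: for $f\in C^n(\mathbb{R})$ set $f^{[0]}=f$ and for $1\le k\le n$, $f^{[k]}(\lambda_0,\lambda_1,\lambda)=\frac{f^{[k-1]}(\lambda_0,\lambda)-f^{[k-1]}(\lambda_1,\lambda)}{\lambda_0-\lambda_1}$ if $\lambda_0\ne\lambda_1$, and $=\frac{d}{d\mu}f^{[k-1]}(\mu,\lambda)|_{\mu=\lambda_0}$ if $\lambda_0=\lambda_1$; these are symmetric in their arguments. Notation: for reals $\mu_0,\dots,\mu_m$ and nonnegative integers $\beta_0,\dots,\beta_m$ with $N=\sum\beta_r\ge1$, $f[\mu_0^{(\beta_0)},\dots,\mu_m^{(\beta_m)}]:=f^{[N-1]}$ evaluated at the list in which $\mu_r$ is repeated $\beta_r$ times. *)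

theory Defs
  imports "HOL-Analysis.Analysis"
begin

text \<open>Divided differences f^{[k]} evaluated at a list of k+1 points (list of length k+1).
  The empty list case is an irrelevant default.\<close>
fun dd :: "(real \<Rightarrow> real) \<Rightarrow> real list \<Rightarrow> real" where
  "dd f [] = 0"
| "dd f [x] = f x"
| "dd f (x0 # x1 # xs) =
     (if x0 \<noteq> x1 then (dd f (x0 # xs) - dd f (x1 # xs)) / (x0 - x1)
      else deriv (\<lambda>\<mu>. dd f (\<mu> # xs)) x0)"

text \<open>f[mu_0^(beta_0), ..., mu_m^(beta_m)] given as a list of pairs (mu_r, beta_r).\<close>
definition ddm :: "(real \<Rightarrow> real) \<Rightarrow> (real \<times> nat) list \<Rightarrow> real" where
  "ddm f ps = dd f (concat (map (\<lambda>(\<mu>, \<beta>). replicate \<beta> \<mu>) ps))"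

definition Cn :: "nat \<Rightarrow> (real \<Rightarrow> real) \<Rightarrow> bool" where
  "Cn n f \<longleftrightarrow> (\<forall>k<n. \<forall>x. (deriv ^^ k) f differentiable (at x))
                 \<and> continuous_on UNIV ((deriv ^^ n) f)"

definition pcoef :: "nat \<Rightarrow> nat \<Rightarrow> real \<Rightarrow> real" where
  "pcoef a l x = real ((a + l - 1) choose l) * x ^ a * (1 - x) ^ l"

end

theory Submission
  imports Defs
begin

text \<open>
  For f of class C^n, the map mu |-> f[mu, M] is of class C^(n - |M|): the difference quotient
  (h mu - h b) / (mu - b), being the integral of h'(b + t (mu - b)) over t in [0, 1], costs
  exactly one derivative. Hence divided differences with at most n + 1 nodes are symmetric: by
  induction on the number of nodes the tail may be permuted freely, and the transpositions of
  the first two and of the second and third nodes generate everything else. Symmetry makes the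
  defining recursion available for any pair of distinct nodes. Let G(a, b, c) be the divided
  difference with multiplicities a, b, c at x = lambda_i, y = lambda_j, z = lambda_k; adding
  the recursions for the pairs (x, y), (z, y), (x, z) gives
  G(a, b, c) = t G(a - 1, b, c + 1) + s G(a, b - 1, c + 1) with s = (x - z) / (x - y) and
  t = 1 - s. Unrolling this until a or b reaches zero sums over lattice paths, whose weights
  are the negative binomial coefficients p_{b,l}(s) and p_{a,l}(t).
\<close>

definition diff_quot :: "real \<Rightarrow> (real \<Rightarrow> real) \<Rightarrow> real \<Rightarrow> real" where
  "diff_quot b h \<mu> = (if \<mu> \<noteq> b then (h \<mu> - h b) / (\<mu> - b) else deriv h b)"

lemma Cn_has_real_derivative:
  assumes "Cn (Suc k) h" "p \<le> k"
  shows "((deriv ^^ p) h has_real_derivative (deriv ^^ Suc p) h x) (at x)"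
  using assms unfolding Cn_def by (simp add: DERIV_deriv_iff_real_differentiable)

lemma Cn_continuous_on_deriv:
  assumes "Cn k h" "p \<le> k"
  shows "continuous_on UNIV ((deriv ^^ p) h)"
proof (cases "p = k")
  case True
  then show ?thesis using assms by (simp add: Cn_def)
next
  case False
  then have "\<forall>x. (deriv ^^ p) h differentiable (at x)" using assms by (simp add: Cn_def)
  then show ?thesis
    by (meson continuous_at_imp_continuous_on differentiable_imp_continuous_within)
qed

lemma diff_quot_eq_integral:
  assumes h': "\<And>x. (h has_real_derivative h' x) (at x)"
  shows "diff_quot b h \<mu> = integral {0..1} (\<lambda>t. h' (b + t * (\<mu> - b)))"
proof (cases "\<mu> = b")
  case True
  then show ?thesis using h' by (simp add: diff_quot_def DERIV_imp_deriv)
next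
  case False
  have "((\<lambda>t. h' (b + t * (\<mu> - b)) * (\<mu> - b)) has_integral
         h (b + 1 * (\<mu> - b)) - h (b + 0 * (\<mu> - b))) {0..1}"
  proof (rule fundamental_theorem_of_calculus)
    fix t :: real
    have "((\<lambda>t. h (b + t * (\<mu> - b))) has_real_derivative h' (b + t * (\<mu> - b)) * (\<mu> - b)) (at t)"
      by (rule DERIV_chain2[OF h']) (auto intro!: derivative_eq_intros)
    then show "((\<lambda>t. h (b + t * (\<mu> - b))) has_vector_derivative
                 h' (b + t * (\<mu> - b)) * (\<mu> - b)) (at t within {0..1})"
      by (simp add: has_real_derivative_iff_has_vector_derivative has_vector_derivative_at_within)
  qed simp
  then have "integral {0..1} (\<lambda>t. h' (b + t * (\<mu> - b))) * (\<mu> - b) = h \<mu> - h b"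
    by (auto dest: integral_unique)
  then show ?thesis using False by (simp add: diff_quot_def field_simps)
qed

definition diff_quot_integral :: "(real \<Rightarrow> real) \<Rightarrow> real \<Rightarrow> nat \<Rightarrow> real \<Rightarrow> real" where
  "diff_quot_integral h b p \<mu> =
     integral (cbox 0 1) (\<lambda>t. t ^ p * (deriv ^^ Suc p) h (b + t * (\<mu> - b)))"

lemma diff_quot_integral_has_real_derivative:
  assumes h: "Cn (Suc k) h" and "p < k"
  shows "(diff_quot_integral h b p has_real_derivative diff_quot_integral h b (Suc p) \<mu>) (at \<mu>)"
proof -
  let ?\<phi> = "(deriv ^^ Suc p) h" and ?\<phi>' = "(deriv ^^ Suc (Suc p)) h"
  have \<phi>': "\<And>y. (?\<phi> has_real_derivative ?\<phi>' y) (at y)"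
    using Cn_has_real_derivative[OF h, of "Suc p"] \<open>p < k\<close> by simp
  have cont: "continuous_on UNIV ?\<phi>" "continuous_on UNIV ?\<phi>'"
    using Cn_continuous_on_deriv[OF h, of "Suc p"] Cn_continuous_on_deriv[OF h, of "Suc (Suc p)"]
      \<open>p < k\<close> by simp_all
  have "((\<lambda>x. integral (cbox 0 1) (\<lambda>t. t ^ p * ?\<phi> (b + t * (x - b)))) has_field_derivative
        integral (cbox 0 1) (\<lambda>t. t ^ p * (?\<phi>' (b + t * (\<mu> - b)) * t))) (at \<mu> within UNIV)"
  proof (rule leibniz_rule_field_derivative)
    fix x t :: real
    have "((\<lambda>x. ?\<phi> (b + t * (x - b))) has_real_derivative ?\<phi>' (b + t * (x - b)) * t) (at x)"
      by (rule DERIV_chain2[OF \<phi>']) (auto intro!: derivative_eq_intros)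
    then show "((\<lambda>x. t ^ p * ?\<phi> (b + t * (x - b))) has_real_derivative
                 t ^ p * (?\<phi>' (b + t * (x - b)) * t)) (at x within UNIV)"
      by (rule DERIV_cmult)
  next
    fix x :: real
    show "(\<lambda>t. t ^ p * ?\<phi> (b + t * (x - b))) integrable_on cbox 0 1"
      by (rule integrable_continuous)
        (auto intro!: continuous_intros continuous_on_compose2[OF cont(1)[simplified]])
  next
    show "continuous_on (UNIV \<times> cbox 0 1) (\<lambda>(x, t). t ^ p * (?\<phi>' (b + t * (x - b)) * t))"
      by (auto simp: split_beta intro!: continuous_intros continuous_on_compose2[OF cont(2)[simplified]])
  qed auto
  moreover have "integral (cbox 0 1) (\<lambda>t. t ^ p * (?\<phi>' (b + t * (\<mu> - b)) * t))
      = diff_quot_integral h b (Suc p) \<mu>"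
    unfolding diff_quot_integral_def by (rule integral_cong) (simp add: mult_ac)
  ultimately show ?thesis
    by (simp add: diff_quot_integral_def[abs_def])
qed

lemma funpow_deriv_diff_quot:
  assumes h: "Cn (Suc k) h"
  shows "p \<le> k \<Longrightarrow> (deriv ^^ p) (diff_quot b h) = diff_quot_integral h b p"
proof (induction p)
  case 0
  show ?case
    using diff_quot_eq_integral[OF Cn_has_real_derivative[OF h, of 0]]
    by (simp add: diff_quot_integral_def fun_eq_iff)
next
  case (Suc p)
  then have IH: "(deriv ^^ p) (diff_quot b h) = diff_quot_integral h b p" by simp
  show ?case
    unfolding funpow.simps comp_def IH
    by (rule ext, rule DERIV_imp_deriv, rule diff_quot_integral_has_real_derivative[OF h])
      (use Suc.prems in simp)
qed

lemma Cn_diff_quot: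
  assumes h: "Cn (Suc k) h"
  shows "Cn k (diff_quot b h)"
  unfolding Cn_def
proof (intro conjI allI impI)
  fix p x
  assume "p < k"
  then show "(deriv ^^ p) (diff_quot b h) differentiable at x"
    using funpow_deriv_diff_quot[OF h, of p b] diff_quot_integral_has_real_derivative[OF h, of p b x]
    by (auto simp: real_differentiable_def)
next
  have cont: "continuous_on UNIV ((deriv ^^ Suc k) h)"
    using Cn_continuous_on_deriv[OF h, of "Suc k"] by simp
  have "continuous_on UNIV (diff_quot_integral h b k)"
    unfolding diff_quot_integral_def[abs_def]
    by (rule integral_continuous_on_param)
      (auto simp: split_beta intro!: continuous_intros continuous_on_compose2[OF cont[simplified]])
  then show "continuous_on UNIV ((deriv ^^ k) (diff_quot b h))"
    using funpow_deriv_diff_quot[OF h, of k b] by simp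
qed

lemma Cn_dd_Cons:
  assumes f: "Cn n f"
  shows "length xs \<le> n \<Longrightarrow> Cn (n - length xs) (\<lambda>\<mu>. dd f (\<mu> # xs))"
proof (induction xs)
  case Nil
  have "(\<lambda>\<mu>. dd f [\<mu>]) = f" by (simp add: fun_eq_iff)
  then show ?case using f by simp
next
  case (Cons b xs)
  then have "Cn (Suc (n - length (b # xs))) (\<lambda>\<mu>. dd f (\<mu> # xs))"
    by (simp add: Suc_diff_Suc)
  then have "Cn (n - length (b # xs)) (diff_quot b (\<lambda>\<mu>. dd f (\<mu> # xs)))"
    by (rule Cn_diff_quot)
  moreover have "diff_quot b (\<lambda>\<mu>. dd f (\<mu> # xs)) = (\<lambda>\<mu>. dd f (\<mu> # b # xs))"
    by (simp add: fun_eq_iff diff_quot_def)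
  ultimately show ?case by simp
qed

lemma dd_Cons_differentiable:
  assumes "Cn n f" "length xs < n"
  shows "(\<lambda>\<mu>. dd f (\<mu> # xs)) differentiable at x"
proof -
  obtain m where "n - length xs = Suc m" using assms(2) by (metis Suc_diff_Suc)
  then have "Cn (Suc m) (\<lambda>\<mu>. dd f (\<mu> # xs))" using Cn_dd_Cons[OF assms(1), of xs] assms(2) by simp
  then show ?thesis unfolding Cn_def by (metis funpow_0 zero_less_Suc)
qed

lemma dd_swap_first:
  "dd f (a # b # xs) = dd f (b # a # xs)"
  by (cases "a = b") (simp_all add: field_split_simps)

lemma dd_swap_repeated:
  assumes "a \<noteq> c" and "(\<lambda>\<mu>. dd f (\<mu> # xs)) differentiable at a"
  shows "dd f (a # a # c # xs) = dd f (a # c # a # xs)"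
proof -
  let ?g = "\<lambda>\<mu>. dd f (\<mu> # xs)"
  let ?D = "(deriv ?g a * (a - c) - (?g a - ?g c)) / (a - c)\<^sup>2"
  have "(?g has_real_derivative deriv ?g a) (at a)"
    using assms(2) by (simp add: DERIV_deriv_iff_real_differentiable)
  then have "((\<lambda>\<mu>. (?g \<mu> - ?g c) / (\<mu> - c)) has_real_derivative ?D) (at a)"
    using \<open>a \<noteq> c\<close> by (auto intro!: derivative_eq_intros simp: power2_eq_square)
  then have "((\<lambda>\<mu>. dd f (\<mu> # c # xs)) has_real_derivative ?D) (at a)"
    by (rule has_field_derivative_transform_within_open[of _ _ _ "- {c}"])
      (use \<open>a \<noteq> c\<close> in auto)
  then have "dd f (a # a # c # xs) = ?D"
    by (simp add: DERIV_imp_deriv)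
  also have "\<dots> = dd f (a # c # a # xs)"
    using \<open>a \<noteq> c\<close> by (simp add: field_split_simps power2_eq_square)
  finally show ?thesis .
qed

lemma dd_swap_second_third:
  assumes "(\<lambda>\<mu>. dd f (\<mu> # xs)) differentiable at a"
  shows "dd f (a # b # c # xs) = dd f (a # c # b # xs)"
proof -
  consider "b = c" | "a = b" "a \<noteq> c" | "a = c" "a \<noteq> b" | "a \<noteq> b" "a \<noteq> c" "b \<noteq> c"
    by blast
  then show ?thesis
  proof cases
    case 1
    then show ?thesis by (simp only:)
  next
    case 2
    then show ?thesis using dd_swap_repeated[of a c f xs] assms by metis
  next
    case 3
    then show ?thesis using dd_swap_repeated[of a b f xs] assms by metis
  next
    case 4
    then have "b \<noteq> a" "c \<noteq> a" "c \<noteq> b" by auto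
    with 4 show ?thesis by (simp add: field_split_simps)
  qed
qed

lemma dd_Cons_Cons_cong:
  assumes "\<And>\<mu>. dd f (\<mu> # xs) = dd f (\<mu> # ys)"
  shows "dd f (a # b # xs) = dd f (a # b # ys)"
  using assms by simp

lemma mset_eq_imp_eq_by_swaps:
  fixes P :: "'a list \<Rightarrow> 'b"
  assumes swap: "\<And>a b zs. length zs + 2 = length xs \<Longrightarrow> P (a # b # zs) = P (b # a # zs)"
    and tail: "\<And>a zs zs'. length zs + 1 = length xs \<Longrightarrow> mset zs = mset zs' \<Longrightarrow>
                 P (a # zs) = P (a # zs')"
    and eq: "mset xs = mset ys"
  shows "P xs = P ys"
proof (cases xs)
  case Nil
  then show ?thesis using eq by simp
next
  case (Cons a zs)
  obtain a' zs' where ys: "ys = a' # zs'" using eq Cons by (cases ys) auto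
  show ?thesis
  proof (cases "a = a'")
    case True
    show ?thesis unfolding Cons ys True by (rule tail) (use eq in \<open>simp_all add: Cons ys True\<close>)
  next
    case False
    define ws where "ws = remove1 a' zs"
    have "add_mset a (mset zs) = add_mset a' (mset zs')"
      using eq by (simp add: Cons ys)
    then have "mset zs = add_mset a' (mset zs' - {#a#})" "mset zs' = add_mset a (mset zs - {#a'#})"
      using False unfolding add_eq_conv_diff by blast+
    then have ws1: "mset zs = mset (a' # ws)" and ws2: "mset zs' = mset (a # ws)"
      by (simp_all add: ws_def mset_remove1)
    have "P xs = P (a # a' # ws)"
      unfolding Cons by (rule tail) (simp_all add: Cons ws1)
    also have "\<dots> = P (a' # a # ws)"
      by (rule swap) (simp add: Cons mset_eq_length[OF ws1])
    also have "\<dots> = P ys"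
      unfolding ys by (rule tail) (simp_all add: Cons ws2 mset_eq_length[OF ws1])
    finally show ?thesis .
  qed
qed

lemma dd_eq_if_mset_eq:
  assumes f: "Cn n f"
  shows "length xs \<le> n + 1 \<Longrightarrow> mset xs = mset ys \<Longrightarrow> dd f xs = dd f ys"
proof (induction "length xs" arbitrary: xs ys rule: less_induct)
  case less
  have tail: "dd f (a # zs) = dd f (a # zs')"
    if "length zs + 1 = length xs" "mset zs = mset zs'" for a zs zs'
  proof (rule mset_eq_imp_eq_by_swaps[where P = "\<lambda>zs. dd f (a # zs)", OF _ _ that(2)])
    fix b c :: real and ws :: "real list"
    assume "length ws + 2 = length zs"
    then show "dd f (a # b # c # ws) = dd f (a # c # b # ws)"
      using that less.prems by (intro dd_swap_second_third dd_Cons_differentiable[OF f]) simp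
  next
    fix b :: real and ws ws' :: "real list"
    assume "length ws + 1 = length zs" "mset ws = mset ws'"
    then show "dd f (a # b # ws) = dd f (a # b # ws')"
      using that less.prems by (intro dd_Cons_Cons_cong less.hyps) auto
  qed
  show ?case
    by (rule mset_eq_imp_eq_by_swaps[where P = "dd f", OF dd_swap_first tail less.prems(2)])
qed

lemma dd_mset_recurrence:
  assumes f: "Cn n f" and "x \<noteq> y" and len: "length xs \<le> n + 1"
    and "mset xs = mset (x # y # zs)" "mset xs\<^sub>1 = mset (x # zs)" "mset xs\<^sub>2 = mset (y # zs)"
  shows "(x - y) * dd f xs = dd f xs\<^sub>1 - dd f xs\<^sub>2"
proof -
  have len_zs: "length xs = length zs + 2" using mset_eq_length[OF assms(4)] by simp
  have "dd f xs = dd f (x # y # zs)"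
    by (rule dd_eq_if_mset_eq[OF f len assms(4)])
  moreover have "dd f xs\<^sub>1 = dd f (x # zs)"
    by (rule dd_eq_if_mset_eq[OF f _ assms(5)]) (use len len_zs mset_eq_length[OF assms(5)] in simp)
  moreover have "dd f xs\<^sub>2 = dd f (y # zs)"
    by (rule dd_eq_if_mset_eq[OF f _ assms(6)]) (use len len_zs mset_eq_length[OF assms(6)] in simp)
  ultimately show ?thesis using \<open>x \<noteq> y\<close> by simp
qed

lemma pcoef_Suc_Suc:
  "pcoef (Suc b) (Suc l) x = (1 - x) * pcoef (Suc b) l x + x * pcoef b (Suc l) x"
  by (simp add: pcoef_def algebra_simps)

lemma sum_pcoef_Suc:
  fixes U :: "nat \<Rightarrow> real"
  shows "(\<Sum>l<Suc a. pcoef (Suc b) l x * U l)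
       = (1 - x) * (\<Sum>l<a. pcoef (Suc b) l x * U (Suc l)) + x * (\<Sum>l<Suc a. pcoef b l x * U l)"
proof -
  have p0: "pcoef (Suc b) 0 x = x * pcoef b 0 x" by (simp add: pcoef_def)
  have "(\<Sum>l<Suc a. pcoef (Suc b) l x * U l)
     = pcoef (Suc b) 0 x * U 0 + (\<Sum>l<a. pcoef (Suc b) (Suc l) x * U (Suc l))"
    by (rule sum.lessThan_Suc_shift)
  also have "\<dots> = x * (pcoef b 0 x * U 0) + ((1 - x) * (\<Sum>l<a. pcoef (Suc b) l x * U (Suc l))
       + x * (\<Sum>l<a. pcoef b (Suc l) x * U (Suc l)))"
    by (simp only: pcoef_Suc_Suc p0 sum_distrib_left sum.distrib[symmetric] distrib_right
        mult.assoc)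
  also have "(\<Sum>l<Suc a. pcoef b l x * U l)
      = pcoef b 0 x * U 0 + (\<Sum>l<a. pcoef b (Suc l) x * U (Suc l))"
    by (rule sum.lessThan_Suc_shift)
  ultimately show ?thesis by (simp add: algebra_simps)
qed

lemma sum_pcoef_0:
  fixes W :: "nat \<Rightarrow> real"
  assumes "0 < b"
  shows "(\<Sum>l<b. pcoef 0 l x * W l) = W 0"
proof -
  have "(\<Sum>l<b. pcoef 0 l x * W l) = (\<Sum>l\<in>{0}. pcoef 0 l x * W l)"
    by (rule sum.mono_neutral_right) (use assms in \<open>auto simp: pcoef_def gr0_conv_Suc\<close>)
  then show ?thesis by (simp add: pcoef_def)
qed

lemma recurrence_pcoef_expansion:
  fixes G :: "nat \<Rightarrow> nat \<Rightarrow> nat \<Rightarrow> real"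
  assumes st: "t = 1 - s"
    and step: "\<And>a b c. Suc a + Suc b + c \<le> T \<Longrightarrow>
                 G (Suc a) (Suc b) c = t * G a (Suc b) (Suc c) + s * G (Suc a) b (Suc c)"
  shows "0 < a + b \<Longrightarrow> a + b + c \<le> T \<Longrightarrow>
    G a b c = (\<Sum>l<a. pcoef b l s * G (a - l) 0 (c + b + l))
            + (\<Sum>l<b. pcoef a l t * G 0 (b - l) (c + a + l))"
proof (induction "a + b" arbitrary: a b c rule: less_induct)
  case less
  consider "a = 0" | "b = 0" | a' b' where "a = Suc a'" "b = Suc b'"
    by (meson not0_implies_Suc)
  then show ?case
  proof cases
    case 1
    then show ?thesis
      using sum_pcoef_0[where W = "\<lambda>l. G 0 (b - l) (c + l)" and x = t] less.prems by simp
  next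
    case 2
    then show ?thesis
      using sum_pcoef_0[where W = "\<lambda>l. G (a - l) 0 (c + l)" and x = s] less.prems by simp
  next
    case (3 a' b')
    have IH1: "G a' (Suc b') (Suc c)
      = (\<Sum>l<a'. pcoef (Suc b') l s * G (a' - l) 0 (Suc c + Suc b' + l))
      + (\<Sum>l<Suc b'. pcoef a' l t * G 0 (Suc b' - l) (Suc c + a' + l))"
      using less.hyps[of a' "Suc b'" "Suc c"] less.prems 3 by simp
    have IH2: "G (Suc a') b' (Suc c)
      = (\<Sum>l<Suc a'. pcoef b' l s * G (Suc a' - l) 0 (Suc c + b' + l))
      + (\<Sum>l<b'. pcoef (Suc a') l t * G 0 (b' - l) (Suc c + Suc a' + l))"
      using less.hyps[of "Suc a'" b' "Suc c"] less.prems 3 by simp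
    have S: "G (Suc a') (Suc b') c = t * G a' (Suc b') (Suc c) + s * G (Suc a') b' (Suc c)"
      using step[of a' b' c] less.prems 3 by simp
    have PU: "(\<Sum>l<Suc a'. pcoef (Suc b') l s * G (Suc a' - l) 0 (c + Suc b' + l))
      = t * (\<Sum>l<a'. pcoef (Suc b') l s * G (a' - l) 0 (Suc c + Suc b' + l))
      + s * (\<Sum>l<Suc a'. pcoef b' l s * G (Suc a' - l) 0 (Suc c + b' + l))"
      using sum_pcoef_Suc[where U = "\<lambda>l. G (Suc a' - l) 0 (c + Suc b' + l)" and a = a' and b = b']
        st by simp
    have PV: "(\<Sum>l<Suc b'. pcoef (Suc a') l t * G 0 (Suc b' - l) (c + Suc a' + l))
      = s * (\<Sum>l<b'. pcoef (Suc a') l t * G 0 (b' - l) (Suc c + Suc a' + l))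
      + t * (\<Sum>l<Suc b'. pcoef a' l t * G 0 (Suc b' - l) (Suc c + a' + l))"
      using sum_pcoef_Suc[where U = "\<lambda>l. G 0 (Suc b' - l) (c + Suc a' + l)" and a = b' and b = a']
        st by simp
    show ?thesis unfolding 3 using S IH1 IH2 PU PV by (simp add: algebra_simps)
  qed
qed

lemma dd_three_nodes_step:
  assumes f: "Cn n f" and "x \<noteq> y" and len: "Suc a + Suc b + c + length R \<le> n + 1"
  shows "dd f (replicate (Suc a) x @ replicate c z @ replicate (Suc b) y @ R)
    = (z - y) / (x - y) * dd f (replicate a x @ replicate (Suc c) z @ replicate (Suc b) y @ R)
    + (x - z) / (x - y) * dd f (replicate (Suc a) x @ replicate (Suc c) z @ replicate b y @ R)"
proof -
  define G where "G a b c = dd f (replicate a x @ replicate c z @ replicate b y @ R)" for a b c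
  consider "z = x" | "z = y" | "z \<noteq> x" "z \<noteq> y" by blast
  then have "G (Suc a) (Suc b) c
    = (z - y) / (x - y) * G a (Suc b) (Suc c) + (x - z) / (x - y) * G (Suc a) b (Suc c)"
  proof cases
    case 1
    then show ?thesis using \<open>x \<noteq> y\<close> by (simp add: G_def replicate_app_Cons_same)
  next
    case 2
    then show ?thesis using \<open>x \<noteq> y\<close> by (simp add: G_def replicate_app_Cons_same)
  next
    case 3
    define zs where "zs = replicate a x @ replicate c z @ replicate b y @ R"
    have "(x - y) * G (Suc a) (Suc b) c = G (Suc a) b c - G a (Suc b) c"
      "(z - y) * G a (Suc b) (Suc c) = G a b (Suc c) - G a (Suc b) c"
      "(x - z) * G (Suc a) b (Suc c) = G (Suc a) b c - G a b (Suc c)"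
      unfolding G_def
      by (rule dd_mset_recurrence[OF f, of _ _ _ zs];
          use \<open>x \<noteq> y\<close> 3 len in \<open>auto simp: zs_def add_mset_commute\<close>)+
    then have "(x - y) * G (Suc a) (Suc b) c
      = (z - y) * G a (Suc b) (Suc c) + (x - z) * G (Suc a) b (Suc c)"
      by linarith
    then have "G (Suc a) (Suc b) c
      = ((z - y) * G a (Suc b) (Suc c) + (x - z) * G (Suc a) b (Suc c)) / (x - y)"
      using \<open>x \<noteq> y\<close> by (simp add: eq_divide_eq ac_simps)
    then show ?thesis by (simp add: add_divide_distrib)
  qed
  then show ?thesis by (simp add: G_def)
qed

lemma ddm_three_nodes_expansion:
  assumes f: "Cn n f" and "x \<noteq> y" and "0 < a" "0 < b"
    and len: "a + b + c + sum_list (map snd ps) \<le> n + 1"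
  shows "ddm f ([(x, a), (z, c), (y, b)] @ ps)
    = (\<Sum>l<a. pcoef b l ((x - z) / (x - y)) * ddm f ([(x, a - l), (z, c + b + l)] @ ps))
    + (\<Sum>l<b. pcoef a l ((z - y) / (x - y)) * ddm f ([(z, c + a + l), (y, b - l)] @ ps))"
proof -
  define R where "R = concat (map (\<lambda>(\<mu>, \<beta>). replicate \<beta> \<mu>) ps)"
  define G where "G a b c = ddm f ([(x, a), (z, c), (y, b)] @ ps)" for a b c
  have G_dd: "G a b c = dd f (replicate a x @ replicate c z @ replicate b y @ R)" for a b c
    by (simp add: G_def ddm_def R_def)
  have "length (concat (map (\<lambda>(\<mu>, \<beta>). replicate \<beta> \<mu>) qs)) = sum_list (map snd qs)" for qs
    by (induction qs) auto
  then have len_R: "length R = sum_list (map snd ps)"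
    by (simp add: R_def)
  have "G a b c = (\<Sum>l<a. pcoef b l ((x - z) / (x - y)) * G (a - l) 0 (c + b + l))
      + (\<Sum>l<b. pcoef a l ((z - y) / (x - y)) * G 0 (b - l) (c + a + l))"
  proof (rule recurrence_pcoef_expansion[where T = "a + b + c"])
    show "(z - y) / (x - y) = 1 - (x - z) / (x - y)"
      using \<open>x \<noteq> y\<close> by (simp add: field_simps)
  next
    fix a' b' c'
    assume "Suc a' + Suc b' + c' \<le> a + b + c"
    then show "G (Suc a') (Suc b') c'
      = (z - y) / (x - y) * G a' (Suc b') (Suc c') + (x - z) / (x - y) * G (Suc a') b' (Suc c')"
      unfolding G_dd by (intro dd_three_nodes_step[OF f \<open>x \<noteq> y\<close>]) (use len len_R in simp)
  qed (use assms in auto)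
  then show ?thesis by (simp add: G_def ddm_def)
qed

lemma sum_list_filter_upt_notin:
  fixes g :: "nat \<Rightarrow> 'a::comm_monoid_add"
  assumes "S \<subseteq> {..k}"
  shows "sum_list (map g (filter (\<lambda>m. m \<notin> S) [0..<Suc k])) + sum g S = (\<Sum>m\<le>k. g m)"
proof -
  have "sum_list (map g (filter (\<lambda>m. m \<notin> S) [0..<Suc k]))
      = sum g (set (filter (\<lambda>m. m \<notin> S) [0..<Suc k]))"
    by (rule sum_list_distinct_conv_sum_set) simp
  also have "set (filter (\<lambda>m. m \<notin> S) [0..<Suc k]) = {..k} - S"
    by (auto simp: less_Suc_eq_le intro: le_neq_implies_less)
  finally show ?thesis
    using sum.subset_diff[OF assms, of g] by simp
qed

theorem corollary3p2:
  fixes f :: "real \<Rightarrow> real" and n \<kappa> :: nat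
    and lam :: "nat \<Rightarrow> real" and \<alpha> :: "nat \<Rightarrow> nat" and i j k :: nat
  assumes "n \<ge> 2" and "Cn n f"
    and "2 \<le> \<kappa>" and "\<kappa> \<le> n"
    and "(\<Sum>m\<le>\<kappa>. \<alpha> m) \<le> n + 1"
    and "i \<le> \<kappa>" and "j \<le> \<kappa>" and "i \<noteq> j"
    and "lam i \<noteq> lam j" and "\<alpha> i > 0" and "\<alpha> j > 0"
    and "k \<le> \<kappa>" and "k \<noteq> i" and "k \<noteq> j"
  shows
    "let rest = map (\<lambda>m. (lam m, \<alpha> m)) (filter (\<lambda>m. m \<notin> {i, j, k}) [0..<Suc \<kappa>])
     in ddm f ([(lam i, \<alpha> i), (lam k, \<alpha> k), (lam j, \<alpha> j)] @ rest)
      = (\<Sum>l<\<alpha> i. pcoef (\<alpha> j) l ((lam i - lam k) / (lam i - lam j))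
            * ddm f ([(lam i, \<alpha> i - l), (lam k, \<alpha> k + \<alpha> j + l)] @ rest))
      + (\<Sum>l<\<alpha> j. pcoef (\<alpha> i) l ((lam k - lam j) / (lam i - lam j))
            * ddm f ([(lam k, \<alpha> k + \<alpha> i + l), (lam j, \<alpha> j - l)] @ rest))"
proof -
  define rest where "rest = map (\<lambda>m. (lam m, \<alpha> m)) (filter (\<lambda>m. m \<notin> {i, j, k}) [0..<Suc \<kappa>])"
  have "sum_list (map snd rest) + sum \<alpha> {i, j, k} = (\<Sum>m\<le>\<kappa>. \<alpha> m)"
    using sum_list_filter_upt_notin[where g = \<alpha> and S = "{i, j, k}" and k = \<kappa>] assms
    by (simp add: rest_def comp_def)
  moreover have "sum \<alpha> {i, j, k} = \<alpha> i + \<alpha> j + \<alpha> k"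
    using assms by simp
  ultimately have "\<alpha> i + \<alpha> j + \<alpha> k + sum_list (map snd rest) \<le> n + 1"
    using assms(5) by linarith
  then show ?thesis
    unfolding Let_def rest_def[symmetric]
    by (intro ddm_three_nodes_expansion[OF assms(2) assms(9)]) (use assms in simp_all)
qed

end
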